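(* Let $\mathcal{C}$ be a category and $J$ a directed partially ordered set. The assignment $\underline{I}:pro$-$\mathcal{C}\to pro^J$-$\mathcal{C}$ which is the identity on objects and sends the class $[(f,f_\mu)]$ of a morphism $(f,f_\mu):\boldsymbol{X}\to\boldsymbol{Y}$ of inverse systems to the class $[(f,f^j_\mu)]$ with $f^j_\mu=f_\mu$ for all $j\in J$, is a well-defined faithful functor, taking values in the subcategory $(pro^J$-$\mathcal{C})_c$.
   Context: An inverse system $\boldsymbol{X}=(X_\lambda,p_{\lambda\lambda'},\Lambda)$ in $\mathcal{C}$: $\Lambda$ directed preordered, morphisms $p_{\lambda\lambda'}:X_{\lambda'}\to X_\lambda$ for $\lambda\le\lambda'$, $p_{\lambda\lambda}=1$, $p_{\lambda\lambda'}p_{\lambda'\lambda''}=p_{\lambda\lambda''}$. A $J$-morphism $(f,f^j_\mu):\boldsymbol{X}\to\boldsymbol{Y}=(Y_\mu,q_{\mu\mu'},M)$: a function $f:M\to\Lambda$ and $\mathcal{C}$-morphisms $f^j_\mu:X_{f(\mu)}\to Y_\mu$ ($\mu\in M$, $j\in J$) such that for all $\mu\le\mu'$ there exist $\lambda\ge f(\mu),f(\mu')$ and $j_0$ with $f^{j'}_\mu p_{f(\mu)\lambda}=q_{\mu\mu'}f^{j'}_{\mu'}p_{f(\mu')\lambda}$ for all $j'\ge j_0$; it is commutative if the equality holds for all $j\in J$. Composition $(g,g^j_\nu)(f,f^j_\mu)=(fg,g^j_\nu f^j_{g(\nu)})$, identity $(1_\Lambda,1_{X_\lambda})$. $(f,f^j_\mu)\sim(f',f'^j_\mu)$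 iff for every $\mu$ there exist $\lambda\ge f(\mu),f'(\mu)$ and $j_0$ with $f^{j'}_\mu p_{f(\mu)\lambda}=f'^{j'}_\mu p_{f'(\mu)\lambda}$ for all $j'\ge j_0$. $pro^J$-$\mathcal{C}$ is the quotient category; $(pro^J$-$\mathcal{C})_c$ is its subcategory of classes having a commutative representative. $pro$-$\mathcal{C}$ is the usual pro-category, i.e. the case $J=\{1\}$ (morphisms $(f,f_\mu)$ with $f_\mu p_{f(\mu)\lambda}=q_{\mu\mu'}f_{\mu'}p_{f(\mu')\lambda}$ for some $\lambda$, and the analogous equivalence). *)

theory Defs
  imports Main
begin

record ('o, 'm) category =
  Obj :: "'o set"
  Hom :: "'o \<Rightarrow> 'o \<Rightarrow> 'm set"
  cmp :: "'m \<Rightarrow> 'm \<Rightarrow> 'm"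
  idt :: "'o \<Rightarrow> 'm"

definition is_category :: "('o, 'm) category \<Rightarrow> bool" where
  "is_category C \<longleftrightarrow>
     (\<forall>a b. Hom C a b \<noteq> {} \<longrightarrow> a \<in> Obj C \<and> b \<in> Obj C) \<and>
     (\<forall>a b a' b'. Hom C a b \<inter> Hom C a' b' \<noteq> {} \<longrightarrow> a = a' \<and> b = b') \<and>
     (\<forall>a\<in>Obj C. idt C a \<in> Hom C a a) \<and>
     (\<forall>a\<in>Obj C. \<forall>b\<in>Obj C. \<forall>c\<in>Obj C. \<forall>f\<in>Hom C a b. \<forall>g\<in>Hom C b c.
        cmp C g f \<in> Hom C a c) \<and>
     (\<forall>a\<in>Obj C. \<forall>b\<in>Obj C. \<forall>f\<in>Hom C a b.
        cmp C f (idt C a) = f \<and> cmp C (idt C b) f = f) \<and>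
     (\<forall>a\<in>Obj C. \<forall>b\<in>Obj C. \<forall>c\<in>Obj C. \<forall>d\<in>Obj C.
        \<forall>f\<in>Hom C a b. \<forall>g\<in>Hom C b c. \<forall>h\<in>Hom C c d.
        cmp C h (cmp C g f) = cmp C (cmp C h g) f)"

definition preorder_on' :: "'a set \<Rightarrow> ('a \<Rightarrow> 'a \<Rightarrow> bool) \<Rightarrow> bool" where
  "preorder_on' A le \<longleftrightarrow> (\<forall>a\<in>A. le a a) \<and>
     (\<forall>a\<in>A. \<forall>b\<in>A. \<forall>c\<in>A. le a b \<longrightarrow> le b c \<longrightarrow> le a c)"

definition partial_order_on' :: "'a set \<Rightarrow> ('a \<Rightarrow> 'a \<Rightarrow> bool) \<Rightarrow> bool" where
  "partial_order_on' A le \<longleftrightarrow> preorder_on' A le \<and>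
     (\<forall>a\<in>A. \<forall>b\<in>A. le a b \<longrightarrow> le b a \<longrightarrow> a = b)"

definition directed_on :: "'a set \<Rightarrow> ('a \<Rightarrow> 'a \<Rightarrow> bool) \<Rightarrow> bool" where
  "directed_on A le \<longleftrightarrow> (\<forall>a\<in>A. \<forall>b\<in>A. \<exists>c\<in>A. le a c \<and> le b c)"

text \<open>Idx = Lambda, Le = its preorder, Ob l = X_l, Bd l l' = p_{l l'} : X_{l'} -> X_l.\<close>
record ('a, 'o, 'm) invsys =
  Idx :: "'a set"
  Le :: "'a \<Rightarrow> 'a \<Rightarrow> bool"
  Ob :: "'a \<Rightarrow> 'o"
  Bd :: "'a \<Rightarrow> 'a \<Rightarrow> 'm"

definition inv_system :: "('o, 'm) category \<Rightarrow> ('a, 'o, 'm) invsys \<Rightarrow> bool" where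
  "inv_system C X \<longleftrightarrow>
     preorder_on' (Idx X) (Le X) \<and> directed_on (Idx X) (Le X) \<and>
     (\<forall>l\<in>Idx X. Ob X l \<in> Obj C) \<and>
     (\<forall>l\<in>Idx X. \<forall>l'\<in>Idx X. Le X l l' \<longrightarrow> Bd X l l' \<in> Hom C (Ob X l') (Ob X l)) \<and>
     (\<forall>l\<in>Idx X. Bd X l l = idt C (Ob X l)) \<and>
     (\<forall>l\<in>Idx X. \<forall>l'\<in>Idx X. \<forall>l''\<in>Idx X. Le X l l' \<longrightarrow> Le X l' l'' \<longrightarrow>
        cmp C (Bd X l l') (Bd X l' l'') = Bd X l l'')"

definition pro_mor :: "('o, 'm) category \<Rightarrow> ('a, 'o, 'm) invsys \<Rightarrow> ('b, 'o, 'm) invsys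
    \<Rightarrow> ('b \<Rightarrow> 'a) \<Rightarrow> ('b \<Rightarrow> 'm) \<Rightarrow> bool" where
  "pro_mor C X Y f F \<longleftrightarrow>
     (\<forall>mu\<in>Idx Y. f mu \<in> Idx X \<and> F mu \<in> Hom C (Ob X (f mu)) (Ob Y mu)) \<and>
     (\<forall>mu\<in>Idx Y. \<forall>mu'\<in>Idx Y. Le Y mu mu' \<longrightarrow>
        (\<exists>l\<in>Idx X. Le X (f mu) l \<and> Le X (f mu') l \<and>
           cmp C (F mu) (Bd X (f mu) l) = cmp C (Bd Y mu mu') (cmp C (F mu') (Bd X (f mu') l))))"

definition pro_eq :: "('o, 'm) category \<Rightarrow> ('a, 'o, 'm) invsys \<Rightarrow> ('b, 'o, 'm) invsys
    \<Rightarrow> ('b \<Rightarrow> 'a) \<Rightarrow> ('b \<Rightarrow> 'm) \<Rightarrow> ('b \<Rightarrow> 'a) \<Rightarrow> ('b \<Rightarrow> 'm) \<Rightarrow> bool" where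
  "pro_eq C X Y f F f' F' \<longleftrightarrow>
     (\<forall>mu\<in>Idx Y. \<exists>l\<in>Idx X. Le X (f mu) l \<and> Le X (f' mu) l \<and>
        cmp C (F mu) (Bd X (f mu) l) = cmp C (F' mu) (Bd X (f' mu) l))"

definition pro_comp_map :: "('o, 'm) category \<Rightarrow> ('b \<Rightarrow> 'm) \<Rightarrow> ('c \<Rightarrow> 'b) \<Rightarrow> ('c \<Rightarrow> 'm)
    \<Rightarrow> ('c \<Rightarrow> 'm)" where
  "pro_comp_map C F g G = (\<lambda>nu. cmp C (G nu) (F (g nu)))"

definition pro_id_map :: "('o, 'm) category \<Rightarrow> ('a, 'o, 'm) invsys \<Rightarrow> ('a \<Rightarrow> 'm)" where
  "pro_id_map C X = (\<lambda>l. idt C (Ob X l))"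

definition eventually_J :: "'j set \<Rightarrow> ('j \<Rightarrow> 'j \<Rightarrow> bool) \<Rightarrow> ('j \<Rightarrow> bool) \<Rightarrow> bool" where
  "eventually_J J leJ P \<longleftrightarrow> (\<exists>j0\<in>J. \<forall>j\<in>J. leJ j0 j \<longrightarrow> P j)"

definition J_mor :: "('o, 'm) category \<Rightarrow> 'j set \<Rightarrow> ('j \<Rightarrow> 'j \<Rightarrow> bool)
    \<Rightarrow> ('a, 'o, 'm) invsys \<Rightarrow> ('b, 'o, 'm) invsys
    \<Rightarrow> ('b \<Rightarrow> 'a) \<Rightarrow> ('j \<Rightarrow> 'b \<Rightarrow> 'm) \<Rightarrow> bool" where
  "J_mor C J leJ X Y f F \<longleftrightarrow>
     (\<forall>mu\<in>Idx Y. f mu \<in> Idx X \<and> (\<forall>j\<in>J. F j mu \<in> Hom C (Ob X (f mu)) (Ob Y mu))) \<and>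
     (\<forall>mu\<in>Idx Y. \<forall>mu'\<in>Idx Y. Le Y mu mu' \<longrightarrow>
        (\<exists>l\<in>Idx X. Le X (f mu) l \<and> Le X (f mu') l \<and>
           eventually_J J leJ (\<lambda>j.
             cmp C (F j mu) (Bd X (f mu) l) =
             cmp C (Bd Y mu mu') (cmp C (F j mu') (Bd X (f mu') l)))))"

definition J_mor_commutative :: "('o, 'm) category \<Rightarrow> 'j set \<Rightarrow> ('j \<Rightarrow> 'j \<Rightarrow> bool)
    \<Rightarrow> ('a, 'o, 'm) invsys \<Rightarrow> ('b, 'o, 'm) invsys
    \<Rightarrow> ('b \<Rightarrow> 'a) \<Rightarrow> ('j \<Rightarrow> 'b \<Rightarrow> 'm) \<Rightarrow> bool" where
  "J_mor_commutative C J leJ X Y f F \<longleftrightarrow> J_mor C J leJ X Y f F \<and>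
     (\<forall>mu\<in>Idx Y. \<forall>mu'\<in>Idx Y. Le Y mu mu' \<longrightarrow>
        (\<exists>l\<in>Idx X. Le X (f mu) l \<and> Le X (f mu') l \<and>
           (\<forall>j\<in>J. cmp C (F j mu) (Bd X (f mu) l) =
             cmp C (Bd Y mu mu') (cmp C (F j mu') (Bd X (f mu') l)))))"

definition J_eq :: "('o, 'm) category \<Rightarrow> 'j set \<Rightarrow> ('j \<Rightarrow> 'j \<Rightarrow> bool)
    \<Rightarrow> ('a, 'o, 'm) invsys \<Rightarrow> ('b, 'o, 'm) invsys
    \<Rightarrow> ('b \<Rightarrow> 'a) \<Rightarrow> ('j \<Rightarrow> 'b \<Rightarrow> 'm) \<Rightarrow> ('b \<Rightarrow> 'a) \<Rightarrow> ('j \<Rightarrow> 'b \<Rightarrow> 'm) \<Rightarrow> bool" where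
  "J_eq C J leJ X Y f F f' F' \<longleftrightarrow>
     (\<forall>mu\<in>Idx Y. \<exists>l\<in>Idx X. Le X (f mu) l \<and> Le X (f' mu) l \<and>
        eventually_J J leJ (\<lambda>j. cmp C (F j mu) (Bd X (f mu) l) = cmp C (F' j mu) (Bd X (f' mu) l)))"

definition J_comp_map :: "('o, 'm) category \<Rightarrow> ('j \<Rightarrow> 'b \<Rightarrow> 'm) \<Rightarrow> ('c \<Rightarrow> 'b)
    \<Rightarrow> ('j \<Rightarrow> 'c \<Rightarrow> 'm) \<Rightarrow> ('j \<Rightarrow> 'c \<Rightarrow> 'm)" where
  "J_comp_map C F g G = (\<lambda>j nu. cmp C (G j nu) (F j (g nu)))"

definition J_id_map :: "('o, 'm) category \<Rightarrow> ('a, 'o, 'm) invsys \<Rightarrow> ('j \<Rightarrow> 'a \<Rightarrow> 'm)" where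
  "J_id_map C X = (\<lambda>j l. idt C (Ob X l))"

definition I_map :: "('b \<Rightarrow> 'm) \<Rightarrow> ('j \<Rightarrow> 'b \<Rightarrow> 'm)" where
  "I_map F = (\<lambda>j. F)"

end

theory Submission
  imports Defs
begin

text \<open>The family \<open>f\<^sup>j\<^sub>\<mu> = f\<^sub>\<mu>\<close> does not depend on \<open>j\<close>, so each condition
  "for all \<open>j \<ge> j\<^sub>0\<close>" imposed on it is a constant predicate on \<open>J\<close>; for nonempty \<open>J\<close> with a
  reflexive order it holds eventually iff it holds outright. Hence \<open>I\<close> turns the definitions of
  \<open>J\<close>-morphism, commutativity and equivalence into those of \<open>pro\<close>-\<open>\<C>\<close> verbatim, and the functor
  laws hold on the nose, already on representatives. None of this uses the category axioms, the
  antisymmetry or the directedness of \<open>J\<close>.\<close>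

lemma eventually_J_const:
  assumes "J \<noteq> {}" and "reflp_on J leJ"
  shows "eventually_J J leJ (\<lambda>_. P) \<longleftrightarrow> P"
  using assms unfolding eventually_J_def reflp_on_def by blast

lemma J_mor_I_map_iff:
  assumes "J \<noteq> {}" and "reflp_on J leJ"
  shows "J_mor C J leJ X Y f (I_map F) \<longleftrightarrow> pro_mor C X Y f F"
  using assms(1)
  by (simp add: J_mor_def pro_mor_def I_map_def eventually_J_const[OF assms] ex_in_conv)

lemma J_mor_commutative_I_map:
  assumes "J \<noteq> {}" and "reflp_on J leJ" and "pro_mor C X Y f F"
  shows "J_mor_commutative C J leJ X Y f (I_map F)"
proof -
  have "J_mor C J leJ X Y f (I_map F)"
    using assms by (simp add: J_mor_I_map_iff)
  with assms(3) show ?thesis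
    unfolding J_mor_commutative_def pro_mor_def I_map_def by blast
qed

lemma J_eq_I_map_iff:
  assumes "J \<noteq> {}" and "reflp_on J leJ"
  shows "J_eq C J leJ X Y f (I_map F) f' (I_map F') \<longleftrightarrow> pro_eq C X Y f F f' F'"
  by (simp add: J_eq_def pro_eq_def I_map_def eventually_J_const[OF assms])

lemma J_eq_refl:
  assumes "J \<noteq> {}" and "inv_system C X" and "\<And>mu. mu \<in> Idx Y \<Longrightarrow> f mu \<in> Idx X"
  shows "J_eq C J leJ X Y f F f F"
  using assms
  unfolding J_eq_def eventually_J_def inv_system_def preorder_on'_def by blast

lemma I_map_pro_id_map: "I_map (pro_id_map C X) = J_id_map C X"
  by (simp add: I_map_def pro_id_map_def J_id_map_def)

lemma I_map_pro_comp_map: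
  "I_map (pro_comp_map C F g G) = J_comp_map C (I_map F) g (I_map G)"
  by (simp add: I_map_def pro_comp_map_def J_comp_map_def)

lemma pro_mor_index: "pro_mor C X Y f F \<Longrightarrow> mu \<in> Idx Y \<Longrightarrow> f mu \<in> Idx X"
  unfolding pro_mor_def by simp

theorem theorem1:
  fixes C :: "('o, 'm) category" and J :: "'j set" and leJ :: "'j \<Rightarrow> 'j \<Rightarrow> bool"
  assumes "is_category C"
    and "partial_order_on' J leJ" and "directed_on J leJ" and "J \<noteq> {}"
  shows
    \<comment> \<open>I sends representatives of pro-morphisms to commutative J-morphisms\<close>
    "(\<forall>(X :: ('a, 'o, 'm) invsys) (Y :: ('b, 'o, 'm) invsys) f F.
        inv_system C X \<and> inv_system C Y \<and> pro_mor C X Y f F \<longrightarrow>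
        J_mor C J leJ X Y f (I_map F) \<and> J_mor_commutative C J leJ X Y f (I_map F)) \<and>
     \<comment> \<open>well-defined on classes\<close>
     (\<forall>(X :: ('a, 'o, 'm) invsys) (Y :: ('b, 'o, 'm) invsys) f F f' F'.
        inv_system C X \<and> inv_system C Y \<and> pro_mor C X Y f F \<and> pro_mor C X Y f' F' \<and>
        pro_eq C X Y f F f' F' \<longrightarrow> J_eq C J leJ X Y f (I_map F) f' (I_map F')) \<and>
     \<comment> \<open>preserves identities\<close>
     (\<forall>X :: ('a, 'o, 'm) invsys. inv_system C X \<longrightarrow>
        J_eq C J leJ X X (\<lambda>l. l) (I_map (pro_id_map C X)) (\<lambda>l. l) (J_id_map C X)) \<and>
     \<comment> \<open>preserves composition\<close>
     (\<forall>(X :: ('a, 'o, 'm) invsys) (Y :: ('b, 'o, 'm) invsys) (Z :: ('c, 'o, 'm) invsys) f F g G.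
        inv_system C X \<and> inv_system C Y \<and> inv_system C Z \<and>
        pro_mor C X Y f F \<and> pro_mor C Y Z g G \<longrightarrow>
        J_eq C J leJ X Z (f \<circ> g) (I_map (pro_comp_map C F g G))
                         (f \<circ> g) (J_comp_map C (I_map F) g (I_map G))) \<and>
     \<comment> \<open>faithful\<close>
     (\<forall>(X :: ('a, 'o, 'm) invsys) (Y :: ('b, 'o, 'm) invsys) f F f' F'.
        inv_system C X \<and> inv_system C Y \<and> pro_mor C X Y f F \<and> pro_mor C X Y f' F' \<and>
        J_eq C J leJ X Y f (I_map F) f' (I_map F') \<longrightarrow> pro_eq C X Y f F f' F')"
proof -
  have "reflp_on J leJ"
    using assms(2) unfolding partial_order_on'_def preorder_on'_def reflp_on_def by blast
  note J = assms(4) this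
  show ?thesis
  proof (intro conjI allI impI; (elim conjE)?)
    fix X Z :: "(_, 'o, 'm) invsys" and f F Y g G
    assume "inv_system C X" "pro_mor C X Y f F" "pro_mor C Y Z g G"
    then show "J_eq C J leJ X Z (f \<circ> g) (I_map (pro_comp_map C F g G))
                         (f \<circ> g) (J_comp_map C (I_map F) g (I_map G))"
      unfolding I_map_pro_comp_map
      by (intro J_eq_refl[OF assms(4)]) (auto dest: pro_mor_index)
  qed (auto simp: J_mor_I_map_iff[OF J] J_mor_commutative_I_map[OF J] J_eq_I_map_iff[OF J]
         I_map_pro_id_map intro: J_eq_refl[OF assms(4)])
qed

end
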